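(* Let $H=(V,E)$ be a hypergraph whose vertex set $V$ is a partition of $[n]$ into sets of cardinality at least $2$, and suppose $H$ is $\alpha$-acyclic. Let $T=(E,\mathcal{E})$ be a join tree of $H$. Then \[ \mathrm{MC}^H=\Big\{w\in \mathbb{R}_{\geq 0}^{\mathcal{J}^H}\ \Big|\ w(I)=1\ \forall\, I\in V;\quad w_i - \sum_{J\in \mathcal{J}^e:\, J\ni i}w_J = 0\ \ \forall\, e\in E,\ \forall\, i\in I\in e; \] \[ \sum_{J\in \mathcal{J}^e:\, J\supseteq J_0} w_J -\sum_{J\in \mathcal{J}^{e'}:\, J\supseteq J_0}w_J = 0\ \ \forall\, \{e,e'\}\in \mathcal{E} \text{ with } |e\cap e'|>1,\ \forall\, J_0\in \mathcal{J}^{e\cap e'}\Big\}. \]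
   Context: Let $n$ be a positive integer, $[n]=\{1,\dots,n\}$. A hypergraph $H=(V,E)$ here has as vertex set $V$ a family of pairwise disjoint subsets of $[n]$, each of cardinality at least $2$, and hyperedge set $E$ consisting of subsets $e\subseteq V$ with $|e|\ge 2$. Write $L(V)=\{\{I\}: I\in V\}$. For a nonempty $e\subseteq V$, $\mathcal{J}^e$ denotes the family of sets $J\subseteq \bigcup_{I\in e} I$ with $|J\cap I|=1$ for every $I\in e$. Let $\mathcal{J}^H=\bigcup_{e\in L(V)\cup E}\mathcal{J}^e$ (it contains every singleton $\{i\}$, $i\in\bigcup V$). For $w\in\mathbb{R}^{\mathcal{J}^H}$ write $w_i=w_{\{i\}}$ and $w(A)=\sum_{i\in A}w_i$. Let $\mathscr{S}^H=\{w\in\{0,1\}^{\mathcal{J}^H}: w(I)=1\ \forall I\in V;\ w_J=\prod_{i\in J}w_i\ \forall J\in\mathcal{J}^H, |J|>1\}$ and $\mathrm{MC}^H=\operatorname{conv}\mathscr{S}^H$. A join tree of $H$ is a tree $T$ with node set $E$ such that for any two distinct nodes $e_1,e_2$, every node $e$ on the unique path in $T$ between them satisfies $e_1\cap e_2\subseteq e$. $H$ is $\alpha$-acyclic in the sense of Fagin; equivalently (Beeri et al.) $H$ admits a join tree. *)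

theory Defs
  imports "HOL-Analysis.Analysis"
begin

(* Points of R^{J^H} are represented as functions  nat set => real  that vanish
   outside the index set J^H (extensional representation). *)

definition conv_fun :: "('a \<Rightarrow> real) set \<Rightarrow> ('a \<Rightarrow> real) set" where
  "conv_fun S = {w. \<exists>F c. finite F \<and> F \<subseteq> S \<and> F \<noteq> {} \<and> (\<forall>s\<in>F. c s \<ge> (0::real)) \<and>
                    sum c F = 1 \<and> w = (\<lambda>x. (\<Sum>s\<in>F. c s * s x))}"

definition partition_ge2 :: "nat \<Rightarrow> nat set set \<Rightarrow> bool" where
  "partition_ge2 n V \<longleftrightarrow> \<Union>V = {1..n} \<and> (\<forall>I\<in>V. card I \<ge> 2) \<and>
      (\<forall>I\<in>V. \<forall>I'\<in>V. I \<noteq> I' \<longrightarrow> I \<inter> I' = {})"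

definition hyperedges_ok :: "nat set set \<Rightarrow> nat set set set \<Rightarrow> bool" where
  "hyperedges_ok V E \<longleftrightarrow> (\<forall>e\<in>E. e \<subseteq> V \<and> card e \<ge> 2)"

definition Jfam :: "nat set set \<Rightarrow> nat set set" where
  "Jfam e = {J. J \<subseteq> \<Union>e \<and> (\<forall>I\<in>e. card (J \<inter> I) = 1)}"

definition Lset :: "nat set set \<Rightarrow> nat set set set" where
  "Lset V = {{I} | I. I \<in> V}"

definition JH :: "nat set set \<Rightarrow> nat set set set \<Rightarrow> nat set set" where
  "JH V E = (\<Union>e\<in>Lset V \<union> E. Jfam e)"

definition wsum :: "(nat set \<Rightarrow> real) \<Rightarrow> nat set \<Rightarrow> real" where
  "wsum w A = (\<Sum>i\<in>A. w {i})"

definition SH :: "nat set set \<Rightarrow> nat set set set \<Rightarrow> (nat set \<Rightarrow> real) set" where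
  "SH V E = {w. (\<forall>J. J \<notin> JH V E \<longrightarrow> w J = 0) \<and>
                (\<forall>J\<in>JH V E. w J \<in> {0, 1}) \<and>
                (\<forall>I\<in>V. wsum w I = 1) \<and>
                (\<forall>J\<in>JH V E. card J > 1 \<longrightarrow> w J = (\<Prod>i\<in>J. w {i}))}"

definition MC :: "nat set set \<Rightarrow> nat set set set \<Rightarrow> (nat set \<Rightarrow> real) set" where
  "MC V E = conv_fun (SH V E)"

definition is_walk :: "'a set set \<Rightarrow> 'a list \<Rightarrow> bool" where
  "is_walk T p \<longleftrightarrow> p \<noteq> [] \<and> (\<forall>k. Suc k < length p \<longrightarrow> {p ! k, p ! Suc k} \<in> T)"

definition is_path :: "'a set set \<Rightarrow> 'a list \<Rightarrow> bool" where
  "is_path T p \<longleftrightarrow> is_walk T p \<and> distinct p"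

definition is_cycle :: "'a set set \<Rightarrow> 'a list \<Rightarrow> bool" where
  "is_cycle T p \<longleftrightarrow> is_path T p \<and> length p \<ge> 3 \<and> {last p, hd p} \<in> T"

definition is_tree :: "'a set \<Rightarrow> 'a set set \<Rightarrow> bool" where
  "is_tree N T \<longleftrightarrow> finite N \<and>
     (\<forall>t\<in>T. \<exists>a b. a \<in> N \<and> b \<in> N \<and> a \<noteq> b \<and> t = {a, b}) \<and>
     (\<forall>a\<in>N. \<forall>b\<in>N. \<exists>p. is_walk T p \<and> hd p = a \<and> last p = b) \<and>
     (\<nexists>p. is_cycle T p)"

definition is_join_tree :: "nat set set set \<Rightarrow> nat set set set set \<Rightarrow> bool" where
  "is_join_tree E T \<longleftrightarrow> is_tree E T \<and>
     (\<forall>p. is_path T p \<longrightarrow> hd p \<noteq> last p \<longrightarrow>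
          (\<forall>e\<in>set p. hd p \<inter> last p \<subseteq> e))"

(* alpha-acyclicity, via the Beeri et al. characterization: existence of a join tree *)
definition alpha_acyclic :: "nat set set \<Rightarrow> nat set set set \<Rightarrow> bool" where
  "alpha_acyclic V E \<longleftrightarrow> (\<exists>T. is_join_tree E T)"

definition MCdesc :: "nat set set \<Rightarrow> nat set set set \<Rightarrow> nat set set set set \<Rightarrow> (nat set \<Rightarrow> real) set" where
  "MCdesc V E T = {w.
     (\<forall>J. J \<notin> JH V E \<longrightarrow> w J = 0) \<and>
     (\<forall>J\<in>JH V E. w J \<ge> 0) \<and>
     (\<forall>I\<in>V. wsum w I = 1) \<and>
     (\<forall>e\<in>E. \<forall>I\<in>e. \<forall>i\<in>I. w {i} - (\<Sum>J\<in>{J\<in>Jfam e. i \<in> J}. w J) = 0) \<and>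
     (\<forall>e e'. {e, e'} \<in> T \<longrightarrow> card (e \<inter> e') > 1 \<longrightarrow>
        (\<forall>J0\<in>Jfam (e \<inter> e').
           (\<Sum>J\<in>{J\<in>Jfam e. J0 \<subseteq> J}. w J) - (\<Sum>J\<in>{J\<in>Jfam e'. J0 \<subseteq> J}. w J) = 0))}"

end

theory Submission
  imports Defs
begin

(* A transversal K of the partition V (one element from each block) determines the 0/1 point
   J |-> [J is a subset of K] of S^H, and every point of S^H arises this way; so MC^H consists of
   the vectors of marginals of probability distributions on transversals, and these satisfy the
   linear description. Conversely, for w in the description, w restricted to J^e is a probability
   distribution on the transversals of e, and the equations say that the distributions of
   neighbouring hyperedges of the join tree have equal marginals on their intersection (for
   intersections of size at most one this is automatic). Listing the hyperedges so that each one
   meets the union of its predecessors inside a single earlier neighbour, which a join tree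
   permits, the distributions can be glued one at a time by p(K_A) q(K_B) / (common marginal),
   giving a distribution on the transversals of V whose marginals are w. *)

section \<open>Transversals and marginals\<close>

lemma finite_Jfam: "finite U \<Longrightarrow> (\<And>I. I \<in> U \<Longrightarrow> finite I) \<Longrightarrow> finite (Jfam U)"
  by (rule finite_subset[of _ "Pow (\<Union>U)"]) (auto simp: Jfam_def)

lemma Jfam_empty [simp]: "Jfam {} = {{}}"
  by (auto simp: Jfam_def)

lemma Jfam_singleton: "Jfam {I} = (\<lambda>i. {i}) ` I"
proof -
  have "J \<in> Jfam {I} \<longleftrightarrow> (\<exists>i\<in>I. J = {i})" for J
  proof
    assume "J \<in> Jfam {I}"
    then have "J \<subseteq> I" "card J = 1" by (auto simp: Jfam_def Int_absorb2)
    then show "\<exists>i\<in>I. J = {i}" by (metis card_1_singletonE insert_subset)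
  qed (auto simp: Jfam_def)
  then show ?thesis by auto
qed

lemma Jfam_subset_Union: "J \<in> Jfam U \<Longrightarrow> J \<subseteq> \<Union>U"
  by (simp add: Jfam_def)

lemma Int_Union_in_Jfam: "K \<in> Jfam U \<Longrightarrow> S \<subseteq> U \<Longrightarrow> K \<inter> \<Union>S \<in> Jfam S"
proof -
  assume "K \<in> Jfam U" "S \<subseteq> U"
  moreover have "K \<inter> \<Union>S \<inter> I = K \<inter> I" if "I \<in> S" for I
    using that by auto
  ultimately show ?thesis by (auto simp: Jfam_def)
qed

lemma Jfam_subset_iff:
  assumes K: "K \<in> Jfam U" and J: "J \<in> Jfam S" and "S \<subseteq> U"
  shows "J \<subseteq> K \<longleftrightarrow> K \<inter> \<Union>S = J"
proof
  assume "J \<subseteq> K"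
  have "K \<inter> I = J \<inter> I" if "I \<in> S" for I
  proof -
    have "card (K \<inter> I) = 1" "card (J \<inter> I) = 1"
      using K J \<open>S \<subseteq> U\<close> that by (auto simp: Jfam_def)
    with \<open>J \<subseteq> K\<close> show ?thesis
      by (metis One_nat_def card.infinite card_subset_eq inf_mono order_refl zero_neq_one)
  qed
  then show "K \<inter> \<Union>S = J" using Jfam_subset_Union[OF J] by blast
qed auto

definition marginal :: "nat set set \<Rightarrow> (nat set \<Rightarrow> real) \<Rightarrow> nat set \<Rightarrow> real" where
  "marginal U p J = (\<Sum>K\<in>{K\<in>Jfam U. J \<subseteq> K}. p K)"

lemma marginal_empty: "marginal U p {} = sum p (Jfam U)"
  by (simp add: marginal_def)

lemma wsum_eq_marginal: "wsum w I = marginal {I} w {}"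
  by (simp add: marginal_empty wsum_def Jfam_singleton sum.reindex)

locale block_family =
  fixes V :: "nat set set"
  assumes disjoint_blocks: "disjoint V"
    and finite_blocks: "finite V" "\<And>I. I \<in> V \<Longrightarrow> finite I"
begin

lemma finite_Jfam_subset:
  assumes "U \<subseteq> V"
  shows "finite (Jfam U)"
proof (rule finite_Jfam)
  show "finite U" using finite_blocks(1) assms by (rule rev_finite_subset)
  show "\<And>I. I \<in> U \<Longrightarrow> finite I" using finite_blocks(2) assms by blast
qed

lemma Union_Int_Union:
  assumes "A \<subseteq> V" "B \<subseteq> V"
  shows "\<Union>A \<inter> \<Union>B = \<Union>(A \<inter> B)"
proof
  show "\<Union>A \<inter> \<Union>B \<subseteq> \<Union>(A \<inter> B)"
  proof
    fix x assume "x \<in> \<Union>A \<inter> \<Union>B"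
    then obtain I I' where I: "I \<in> A" "I' \<in> B" "x \<in> I" "x \<in> I'" by blast
    then have "I = I'" using disjointD[OF disjoint_blocks, of I I'] assms by blast
    with I show "x \<in> \<Union>(A \<inter> B)" by blast
  qed
qed blast

lemma Jfam_Un:
  assumes "A \<subseteq> V" "B \<subseteq> V" and KA: "KA \<in> Jfam A" and KB: "KB \<in> Jfam B"
    and agree: "KA \<inter> \<Union>(A \<inter> B) = KB \<inter> \<Union>(A \<inter> B)"
  shows "KA \<union> KB \<in> Jfam (A \<union> B)" "(KA \<union> KB) \<inter> \<Union>A = KA" "(KA \<union> KB) \<inter> \<Union>B = KB"
proof -
  have kA: "KA \<subseteq> \<Union>A" and kB: "KB \<subseteq> \<Union>B"
    using KA KB by (simp_all add: Jfam_subset_Union)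
  have UAB: "\<Union>A \<inter> \<Union>B = \<Union>(A \<inter> B)" using Union_Int_Union assms(1,2) .
  have "KB \<inter> \<Union>A = KB \<inter> (\<Union>A \<inter> \<Union>B)" using kB by auto
  then have BA: "KB \<inter> \<Union>A = KA \<inter> \<Union>(A \<inter> B)" by (simp add: UAB agree)
  have "KA \<inter> \<Union>B = KA \<inter> (\<Union>A \<inter> \<Union>B)" using kA by auto
  then have AB: "KA \<inter> \<Union>B = KB \<inter> \<Union>(A \<inter> B)" by (simp add: UAB agree)
  show A: "(KA \<union> KB) \<inter> \<Union>A = KA"
    using kA by (auto simp: Int_Un_distrib2 BA)
  show B: "(KA \<union> KB) \<inter> \<Union>B = KB"
    using kB by (auto simp: Int_Un_distrib2 AB)
  have "card ((KA \<union> KB) \<inter> I) = 1" if "I \<in> A \<union> B" for I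
  proof (cases "I \<in> A")
    case True
    then have "(KA \<union> KB) \<inter> I = (KA \<union> KB) \<inter> \<Union>A \<inter> I" by auto
    then show ?thesis using KA True A by (simp add: Jfam_def)
  next
    case False
    then have "I \<in> B" using that by simp
    then have "(KA \<union> KB) \<inter> I = (KA \<union> KB) \<inter> \<Union>B \<inter> I" by auto
    then show ?thesis using KB \<open>I \<in> B\<close> B by (simp add: Jfam_def)
  qed
  then show "KA \<union> KB \<in> Jfam (A \<union> B)"
    using kA kB by (auto simp: Jfam_def)
qed

lemma marginal_marginal:
  assumes "S \<subseteq> R" "R \<subseteq> U" "U \<subseteq> V" and J: "J \<in> Jfam S"
  shows "marginal U p J = marginal R (marginal U p) J"
proof -
  let ?K = "{K\<in>Jfam U. J \<subseteq> K}" and ?L = "{L\<in>Jfam R. J \<subseteq> L}"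
  have restrict: "(\<lambda>K. K \<inter> \<Union>R) ` ?K \<subseteq> ?L"
    using Int_Union_in_Jfam[of _ U R] Jfam_subset_Union[OF J] assms(1,2) by blast
  have fibre: "{K\<in>?K. K \<inter> \<Union>R = L} = {K\<in>Jfam U. L \<subseteq> K}" if "L \<in> ?L" for L
    using that Jfam_subset_iff[of _ U L R] assms(2) by blast
  have "marginal U p J = (\<Sum>L\<in>?L. sum p {K\<in>?K. K \<inter> \<Union>R = L})"
    unfolding marginal_def
    by (rule sum.group[symmetric]) (use assms finite_Jfam_subset restrict in auto)
  also have "\<dots> = marginal R (marginal U p) J"
    unfolding marginal_def[of R]
  proof (rule sum.cong[OF refl])
    fix L assume "L \<in> ?L"
    from fibre[OF this] show "sum p {K\<in>?K. K \<inter> \<Union>R = L} = marginal U p L"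
      by (simp only: marginal_def)
  qed
  finally show ?thesis .
qed

lemma marginal_through:
  assumes "S \<subseteq> R" "R \<subseteq> U" "U \<subseteq> V" and "\<And>K. K \<in> Jfam R \<Longrightarrow> marginal U q K = p K"
    and "J \<in> Jfam S"
  shows "marginal U q J = marginal R p J"
  using marginal_marginal[OF assms(1-3,5)] assms(4) by (simp add: marginal_def)

lemma le_marginal:
  assumes "U \<subseteq> V" "\<forall>K\<in>Jfam U. 0 \<le> p K" "K \<in> Jfam U" "J \<subseteq> K"
  shows "p K \<le> marginal U p J"
  unfolding marginal_def
  by (rule member_le_sum) (use assms finite_Jfam_subset in auto)

lemma marginal_restriction:
  assumes A: "A \<subseteq> V" and B: "B \<subseteq> V" and KA: "KA \<in> Jfam A"
  shows "marginal (A \<union> B) (\<lambda>K. q (K \<inter> \<Union>B)) KA = marginal B q (KA \<inter> \<Union>(A \<inter> B))"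
  unfolding marginal_def
proof (rule sum.reindex_bij_witness[where i = "\<lambda>KB. KA \<union> KB" and j = "\<lambda>K. K \<inter> \<Union>B"])
  fix K assume "K \<in> {K \<in> Jfam (A \<union> B). KA \<subseteq> K}"
  then have K: "K \<in> Jfam (A \<union> B)" "KA \<subseteq> K" by simp_all
  have "K \<inter> \<Union>A = KA" using Jfam_subset_iff[OF K(1) KA Un_upper1] K(2) by simp
  moreover have "K \<subseteq> \<Union>A \<union> \<Union>B" using Jfam_subset_Union[OF K(1)] by simp
  then have "K = K \<inter> \<Union>A \<union> K \<inter> \<Union>B" by blast
  ultimately show "KA \<union> K \<inter> \<Union>B = K" by simp
  have "KA \<inter> \<Union>(A \<inter> B) \<subseteq> K \<inter> \<Union>B" using K(2) by auto
  then show "K \<inter> \<Union>B \<in> {KB \<in> Jfam B. KA \<inter> \<Union>(A \<inter> B) \<subseteq> KB}"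
    using Int_Union_in_Jfam[OF K(1) Un_upper2] by simp
next
  fix KB assume "KB \<in> {KB \<in> Jfam B. KA \<inter> \<Union>(A \<inter> B) \<subseteq> KB}"
  then have KB: "KB \<in> Jfam B" "KA \<inter> \<Union>(A \<inter> B) \<subseteq> KB" by simp_all
  have "KA \<inter> \<Union>(A \<inter> B) \<in> Jfam (A \<inter> B)" using Int_Union_in_Jfam[OF KA Int_lower1] .
  then have "KA \<inter> \<Union>(A \<inter> B) = KB \<inter> \<Union>(A \<inter> B)"
    using Jfam_subset_iff[OF KB(1) _ Int_lower2] KB(2) by simp
  note glued = Jfam_Un[OF A B KA KB(1) this]
  show "(KA \<union> KB) \<inter> \<Union>B = KB" by (rule glued(3))
  show "KA \<union> KB \<in> {K \<in> Jfam (A \<union> B). KA \<subseteq> K}" using glued(1) by simp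
qed simp

end

section \<open>Gluing consistent distributions\<close>

text \<open>The conditional-independence gluing of p on A and q on B along their common marginal.
  Where that marginal vanishes, division by zero yields 0; this is harmless because p vanishes there
  as well.\<close>

definition glue :: "nat set set \<Rightarrow> (nat set \<Rightarrow> real) \<Rightarrow> nat set set \<Rightarrow> (nat set \<Rightarrow> real) \<Rightarrow> nat set \<Rightarrow> real"
  where "glue A p B q K = p (K \<inter> \<Union>A) * q (K \<inter> \<Union>B) / marginal B q (K \<inter> \<Union>(A \<inter> B))"

definition marginals_agree :: "nat set set \<Rightarrow> (nat set \<Rightarrow> real) \<Rightarrow> nat set set \<Rightarrow> (nat set \<Rightarrow> real) \<Rightarrow> bool"
  where "marginals_agree A p B q \<longleftrightarrow> (\<forall>J\<in>Jfam (A \<inter> B). marginal A p J = marginal B q J)"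

lemma glue_commute:
  assumes "marginals_agree A p B q" "K \<in> Jfam (A \<union> B)"
  shows "glue B q A p K = glue A p B q K"
proof -
  have "K \<inter> \<Union>(A \<inter> B) \<in> Jfam (A \<inter> B)" using Int_Union_in_Jfam[OF assms(2)] by blast
  then show ?thesis
    using assms(1) by (simp add: glue_def marginals_agree_def Int_commute[of B A] mult.commute)
qed

lemma glue_nonneg:
  assumes "\<forall>K\<in>Jfam A. 0 \<le> p K" "\<forall>K\<in>Jfam B. 0 \<le> q K" "K \<in> Jfam (A \<union> B)"
  shows "0 \<le> glue A p B q K"
proof -
  have "K \<inter> \<Union>A \<in> Jfam A" "K \<inter> \<Union>B \<in> Jfam B"
    using Int_Union_in_Jfam[OF assms(3)] by auto
  moreover have "0 \<le> marginal B q J" for J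
    unfolding marginal_def using assms(2) by (auto intro: sum_nonneg)
  ultimately show ?thesis
    unfolding glue_def using assms(1,2) by (metis divide_nonneg_nonneg mult_nonneg_nonneg)
qed

context block_family
begin

lemma marginal_glue_left:
  assumes A: "A \<subseteq> V" and B: "B \<subseteq> V" and p: "\<forall>K\<in>Jfam A. 0 \<le> p K"
    and agree: "marginals_agree A p B q" and KA: "KA \<in> Jfam A"
  shows "marginal (A \<union> B) (glue A p B q) KA = p KA"
proof -
  define m where "m = marginal B q (KA \<inter> \<Union>(A \<inter> B))"
  have "marginal (A \<union> B) (glue A p B q) KA = marginal (A \<union> B) (\<lambda>K. p KA / m * q (K \<inter> \<Union>B)) KA"
    unfolding marginal_def
  proof (rule sum.cong[OF refl])
    fix K assume "K \<in> {K \<in> Jfam (A \<union> B). KA \<subseteq> K}"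
    then have "K \<inter> \<Union>A = KA" using Jfam_subset_iff[OF _ KA, of K "A \<union> B"] by auto
    moreover have "K \<inter> \<Union>(A \<inter> B) = K \<inter> \<Union>A \<inter> \<Union>(A \<inter> B)" by blast
    ultimately show "glue A p B q K = p KA / m * q (K \<inter> \<Union>B)"
      by (simp add: glue_def m_def)
  qed
  also have "\<dots> = p KA / m * marginal (A \<union> B) (\<lambda>K. q (K \<inter> \<Union>B)) KA"
    by (simp add: marginal_def sum_distrib_left)
  also have "\<dots> = p KA / m * m"
    using marginal_restriction[OF A B KA] by (simp add: m_def)
  also have "\<dots> = p KA"
  proof (cases "m = 0")
    case True
    have "KA \<inter> \<Union>(A \<inter> B) \<in> Jfam (A \<inter> B)" using Int_Union_in_Jfam[OF KA] by blast
    then have "marginal A p (KA \<inter> \<Union>(A \<inter> B)) = 0"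
      using agree True by (simp add: marginals_agree_def m_def)
    moreover have "p KA \<le> marginal A p (KA \<inter> \<Union>(A \<inter> B))"
      using le_marginal[OF A p KA] by blast
    moreover have "0 \<le> p KA" using p KA by blast
    ultimately have "p KA = 0" by linarith
    then show ?thesis by simp
  qed simp
  finally show ?thesis .
qed

lemma marginal_glue_right:
  assumes A: "A \<subseteq> V" and B: "B \<subseteq> V" and q: "\<forall>K\<in>Jfam B. 0 \<le> q K"
    and agree: "marginals_agree A p B q" and KB: "KB \<in> Jfam B"
  shows "marginal (A \<union> B) (glue A p B q) KB = q KB"
proof -
  have agree': "marginals_agree B q A p"
    using agree unfolding marginals_agree_def by (metis Int_commute)
  have "marginal (A \<union> B) (glue A p B q) KB = marginal (B \<union> A) (glue B q A p) KB"
    unfolding marginal_def Un_commute[of B A]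
  proof (rule sum.cong[OF refl])
    fix K assume "K \<in> {K \<in> Jfam (A \<union> B). KB \<subseteq> K}"
    then show "glue A p B q K = glue B q A p K" using glue_commute[OF agree, of K] by simp
  qed
  also have "\<dots> = q KB" by (rule marginal_glue_left[OF B A q agree' KB])
  finally show ?thesis .
qed

lemma marginals_agree_subset:
  assumes "marginals_agree A p B q" "A \<subseteq> V" "B \<subseteq> V" "S \<subseteq> A \<inter> B" "J \<in> Jfam S"
  shows "marginal A p J = marginal B q J"
proof -
  have agree: "\<And>K. K \<in> Jfam (A \<inter> B) \<Longrightarrow> marginal A p K = marginal B q K"
    using assms(1) by (simp add: marginals_agree_def)
  have "marginal A p J = marginal (A \<inter> B) (marginal B q) J"
    by (rule marginal_through[OF assms(4) _ assms(2) agree assms(5)]) blast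
  also have "\<dots> = marginal B q J"
    by (rule marginal_marginal[OF assms(4) _ assms(3) assms(5), symmetric]) blast
  finally show ?thesis .
qed

end

inductive running_intersection :: "('a set \<Rightarrow> 'a set \<Rightarrow> bool) \<Rightarrow> 'a set list \<Rightarrow> bool"
  for R where
  Nil: "running_intersection R []"
| snoc: "running_intersection R es \<Longrightarrow>
    x \<inter> \<Union>(set es) = {} \<or> (\<exists>e\<in>set es. R x e \<and> x \<inter> \<Union>(set es) \<subseteq> e) \<Longrightarrow>
    running_intersection R (es @ [x])"

lemma running_intersection_mono:
  assumes "running_intersection R es" "\<And>x e. R x e \<Longrightarrow> R' x e"
  shows "running_intersection R' es"
  using assms(1) by induction (use assms(2) in \<open>auto intro: running_intersection.intros\<close>)

lemma running_intersection_append_singletons: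
  assumes "running_intersection R es"
    and "\<And>I X. I \<in> set vs \<Longrightarrow> X \<in> set es \<union> (\<lambda>I. {I}) ` set vs \<Longrightarrow> I \<in> X \<Longrightarrow> R {I} X"
  shows "running_intersection R (es @ map (\<lambda>I. {I}) vs)"
  using assms(2)
proof (induction vs rule: rev_induct)
  case Nil
  then show ?case using assms(1) by simp
next
  case (snoc I vs)
  let ?es = "es @ map (\<lambda>I. {I}) vs"
  have "running_intersection R ?es" using snoc by simp
  moreover have "{I} \<inter> \<Union>(set ?es) = {} \<or> (\<exists>X\<in>set ?es. R {I} X \<and> {I} \<inter> \<Union>(set ?es) \<subseteq> X)"
  proof (cases "I \<in> \<Union>(set ?es)")
    case True
    then obtain X where "X \<in> set ?es" "I \<in> X" by blast
    moreover then have "R {I} X" using snoc.prems by auto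
    ultimately show ?thesis by blast
  qed blast
  ultimately have "running_intersection R (?es @ [{I}])" by (rule running_intersection.snoc)
  then show ?case by simp
qed

context block_family
begin

lemma marginals_agree_Union:
  assumes es: "\<forall>e\<in>set es. e \<subseteq> V" and x: "x \<subseteq> V"
    and p: "sum p (Jfam (\<Union>(set es))) = 1" "\<forall>e\<in>set es. \<forall>J\<in>Jfam e. marginal (\<Union>(set es)) p J = w J"
    and w: "sum w (Jfam x) = 1"
    and attach: "x \<inter> \<Union>(set es) = {} \<or> (\<exists>e\<in>set es. marginals_agree x w e w \<and> x \<inter> \<Union>(set es) \<subseteq> e)"
  shows "marginals_agree (\<Union>(set es)) p x w"
  unfolding marginals_agree_def
proof
  let ?A = "\<Union>(set es)"
  fix J assume J: "J \<in> Jfam (?A \<inter> x)"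
  from attach show "marginal ?A p J = marginal x w J"
  proof
    assume "x \<inter> ?A = {}"
    then have "J = {}" using J by (simp add: Int_commute)
    then show ?thesis using p(1) w by (simp add: marginal_empty)
  next
    assume "\<exists>e\<in>set es. marginals_agree x w e w \<and> x \<inter> ?A \<subseteq> e"
    then obtain e where e: "e \<in> set es" "marginals_agree x w e w" "x \<inter> ?A \<subseteq> e" by blast
    have "marginal ?A p J = marginal e w J"
      by (rule marginal_through[of "?A \<inter> x" e ?A]) (use e es p(2) J in auto)
    also have "\<dots> = marginal x w J"
      by (rule marginals_agree_subset[OF e(2) x, of "?A \<inter> x", symmetric]) (use e es J in auto)
    finally show ?thesis .
  qed
qed

lemma glued_distribution:
  assumes "running_intersection (\<lambda>x e. marginals_agree x w e w) es"
    and "\<forall>e\<in>set es. e \<subseteq> V" "\<forall>e\<in>set es. \<forall>J\<in>Jfam e. 0 \<le> w J" "\<forall>e\<in>set es. sum w (Jfam e) = 1"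
  shows "\<exists>p. (\<forall>K\<in>Jfam (\<Union>(set es)). 0 \<le> p K) \<and> sum p (Jfam (\<Union>(set es))) = 1 \<and>
    (\<forall>e\<in>set es. \<forall>J\<in>Jfam e. marginal (\<Union>(set es)) p J = w J)"
  using assms
proof induction
  case Nil
  show ?case by (intro exI[of _ "\<lambda>_. 1"]) simp
next
  case (snoc es x)
  let ?A = "\<Union>(set es)"
  obtain p where p: "\<forall>K\<in>Jfam ?A. 0 \<le> p K" "sum p (Jfam ?A) = 1"
    and p_marg: "\<forall>e\<in>set es. \<forall>J\<in>Jfam e. marginal ?A p J = w J"
    using snoc by auto
  have A: "?A \<subseteq> V" and x: "x \<subseteq> V" using snoc.prems(1) by auto
  have agree: "marginals_agree ?A p x w"
    using marginals_agree_Union[OF _ x p(2) p_marg _ snoc.hyps(2)] snoc.prems(1,3) by simp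
  let ?q = "glue ?A p x w"
  have U: "\<Union>(set (es @ [x])) = ?A \<union> x" by auto
  have q_left: "marginal (?A \<union> x) ?q K = p K" if "K \<in> Jfam ?A" for K
    using marginal_glue_left[OF A x p(1) agree that] .
  have q_marg: "marginal (?A \<union> x) ?q J = marginal ?A p J" if "S \<subseteq> ?A" "J \<in> Jfam S" for S J
    using marginal_through[OF that(1) _ _ q_left that(2)] A x by blast
  show ?case
  proof (intro exI[of _ ?q] conjI ballI, unfold U)
    show "0 \<le> ?q K" if "K \<in> Jfam (?A \<union> x)" for K
      using glue_nonneg[OF p(1) _ that] snoc.prems(2) by simp
    show "sum ?q (Jfam (?A \<union> x)) = 1"
      using q_marg[of "{}" "{}"] p(2) by (simp add: marginal_empty)
    show "marginal (?A \<union> x) ?q J = w J" if "e \<in> set (es @ [x])" "J \<in> Jfam e" for e J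
    proof (cases "e \<in> set es")
      case True
      then show ?thesis using q_marg[of e J] p_marg that(2) by auto
    next
      case False
      then show ?thesis
        using that marginal_glue_right[OF A x _ agree] snoc.prems(2) by auto
    qed
  qed
qed

end

section \<open>Join trees have running intersection orderings\<close>

lemma is_walk_Nil [simp]: "\<not> is_walk T []"
  by (simp add: is_walk_def)

lemma is_walk_singleton [simp]: "is_walk T [x]"
  by (simp add: is_walk_def)

lemma is_walk_Cons_Cons [simp]: "is_walk T (x # y # p) \<longleftrightarrow> {x, y} \<in> T \<and> is_walk T (y # p)"
  unfolding is_walk_def by (auto simp: less_Suc_eq_0_disj)

lemma is_walk_append: "is_walk T (p @ x # q) \<longleftrightarrow> is_walk T (p @ [x]) \<and> is_walk T (x # q)"
  by (induction p rule: induct_list012) auto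

lemma is_walk_rev: "is_walk T (rev p) \<longleftrightarrow> is_walk T p"
proof (induction p rule: induct_list012)
  case (3 x y p)
  have "is_walk T (rev (x # y # p)) \<longleftrightarrow> is_walk T (rev (y # p)) \<and> {y, x} \<in> T"
    using is_walk_append[of T "rev p" y "[x]"] by simp
  then show ?case using "3.IH"(2) by (auto simp: insert_commute)
qed simp_all

lemma walk_to_path:
  assumes "is_walk T p"
  shows "\<exists>q. is_path T q \<and> hd q = hd p \<and> last q = last p \<and> set q \<subseteq> set p"
  using assms
proof (induction "length p" arbitrary: p rule: less_induct)
  case less
  show ?case
  proof (cases "distinct p")
    case True
    then show ?thesis using less.prems by (auto simp: is_path_def)
  next
    case False
    then obtain xs ys zs y where p: "p = xs @ [y] @ ys @ [y] @ zs"
      using not_distinct_decomp by blast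
    have "is_walk T (xs @ y # (ys @ y # zs))" using less.prems p by simp
    then have "is_walk T (xs @ [y])" "is_walk T ((y # ys) @ y # zs)"
      using is_walk_append[of T xs y "ys @ y # zs"] by simp_all
    then have "is_walk T (xs @ [y])" "is_walk T (y # zs)"
      using is_walk_append[of T "y # ys" y zs] by blast+
    then have walk: "is_walk T (xs @ y # zs)" using is_walk_append[of T xs y zs] by blast
    have "length (xs @ y # zs) < length p" using p by simp
    then obtain q where "is_path T q" "hd q = hd (xs @ y # zs)" "last q = last (xs @ y # zs)"
      "set q \<subseteq> set (xs @ y # zs)"
      using less.hyps[OF _ walk] by blast
    moreover have "hd (xs @ y # zs) = hd p" using p by (cases xs) auto
    moreover have "last (xs @ y # zs) = last p" using p by (cases zs rule: rev_cases) auto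
    moreover have "set (xs @ y # zs) \<subseteq> set p" using p by auto
    ultimately show ?thesis by auto
  qed
qed

lemma walk_leaves_set:
  assumes "is_walk T p" "hd p \<in> S" "last p \<notin> S"
  shows "\<exists>a b. a \<in> S \<and> b \<notin> S \<and> {a, b} \<in> T"
  using assms
proof (induction p rule: induct_list012)
  case (3 x y p)
  then show ?case by (cases "y \<in> S") auto
qed simp_all

lemma tree_edge_nodes: "is_tree N T \<Longrightarrow> {a, b} \<in> T \<Longrightarrow> a \<in> N \<and> b \<in> N"
  unfolding is_tree_def by (metis doubleton_eq_iff)

inductive neighbour_order :: "'a set set \<Rightarrow> 'a list \<Rightarrow> bool"
  for T where
  Nil: "neighbour_order T []"
| singleton: "neighbour_order T [x]"
| snoc: "neighbour_order T es \<Longrightarrow> e \<in> set es \<Longrightarrow> {x, e} \<in> T \<Longrightarrow> neighbour_order T (es @ [x])"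

lemma neighbour_order_walk:
  assumes "neighbour_order T es" "a \<in> set es" "b \<in> set es"
  shows "\<exists>p. is_walk T p \<and> hd p = a \<and> last p = b \<and> set p \<subseteq> set es"
  using assms
proof (induction arbitrary: a b)
  case (singleton x)
  then show ?case by (intro exI[of _ "[x]"]) simp
next
  case (snoc es e x)
  have from_x: "\<exists>p. is_walk T p \<and> hd p = x \<and> last p = c \<and> set p \<subseteq> set (es @ [x])"
    if c: "c \<in> set (es @ [x])" for c
  proof (cases "c = x")
    case True
    then show ?thesis by (intro exI[of _ "[x]"]) simp
  next
    case False
    then obtain q where q: "is_walk T q" "hd q = e" "last q = c" "set q \<subseteq> set es"
      using snoc.IH[OF snoc.hyps(2)] c by auto
    then have "q \<noteq> []" by auto
    then have "is_walk T (x # q)" using q snoc.hyps(3) by (cases q) auto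
    then show ?thesis using q \<open>q \<noteq> []\<close> by (intro exI[of _ "x # q"]) auto
  qed
  show ?case
  proof (cases "a = x \<or> b = x")
    case True
    then show ?thesis
    proof
      assume "a = x"
      then show ?thesis using from_x snoc.prems(2) by blast
    next
      assume "b = x"
      then obtain p where "is_walk T p" "hd p = x" "last p = a" "set p \<subseteq> set (es @ [x])"
        using from_x snoc.prems(1) by blast
      then show ?thesis using \<open>b = x\<close>
        by (intro exI[of _ "rev p"]) (auto simp: is_walk_rev hd_rev last_rev)
    qed
  next
    case False
    then show ?thesis using snoc.IH snoc.prems by fastforce
  qed
qed simp

lemma neighbour_order_extend:
  assumes tree: "is_tree N T" and es: "neighbour_order T es" "es \<noteq> []" "set es \<subseteq> N"
    and c: "c \<in> N" "c \<notin> set es"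
  shows "\<exists>b\<in>N - set es. neighbour_order T (es @ [b])"
proof -
  have "hd es \<in> N" using es(2,3) by auto
  then have "\<exists>p. is_walk T p \<and> hd p = hd es \<and> last p = c"
    using tree c(1) unfolding is_tree_def by blast
  then obtain p where "is_walk T p" "hd p = hd es" "last p = c" by blast
  then obtain a b where ab: "a \<in> set es" "b \<notin> set es" "{a, b} \<in> T"
    using walk_leaves_set[of T p "set es"] c(2) es(2) by auto
  have "neighbour_order T (es @ [b])"
    using neighbour_order.snoc[OF es(1) ab(1)] ab(3) by (simp add: insert_commute)
  then show ?thesis using ab tree_edge_nodes[OF tree ab(3)] by blast
qed

lemma exists_neighbour_order:
  assumes tree: "is_tree N T"
  shows "\<exists>es. distinct es \<and> set es = N \<and> neighbour_order T es"
proof -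
  have fin: "finite N" using tree by (simp add: is_tree_def)
  have "\<exists>es. distinct es \<and> set es \<subseteq> N \<and> length es = k \<and> neighbour_order T es" if "k \<le> card N" for k
    using that
  proof (induction k)
    case 0
    show ?case by (intro exI[of _ "[]"]) (simp add: neighbour_order.Nil)
  next
    case (Suc k)
    then obtain es where es: "distinct es" "set es \<subseteq> N" "length es = k" "neighbour_order T es"
      by auto
    have "card (set es) < card N" using es Suc.prems by (simp add: distinct_card)
    then have "\<not> N \<subseteq> set es" by (meson card_mono finite_set not_le)
    then obtain c where c: "c \<in> N" "c \<notin> set es" by blast
    show ?case
    proof (cases "es = []")
      case True
      then show ?thesis using c es by (intro exI[of _ "[c]"]) (auto intro: neighbour_order.singleton)
    next
      case False
      then obtain b where "b \<in> N - set es" "neighbour_order T (es @ [b])"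
        using neighbour_order_extend[OF tree es(4) False es(2) c] by blast
      then show ?thesis using es by (intro exI[of _ "es @ [b]"]) auto
    qed
  qed
  then obtain es where "distinct es" "set es \<subseteq> N" "length es = card N" "neighbour_order T es"
    by blast
  moreover then have "set es = N" using fin by (simp add: card_subset_eq distinct_card)
  ultimately show ?thesis by blast
qed

lemma join_tree_running_intersection:
  assumes jt: "is_join_tree N T" and "neighbour_order T es" "distinct es"
  shows "running_intersection (\<lambda>x e. {x, e} \<in> T) es"
  using assms(2,3)
proof induction
  case Nil
  show ?case by (rule running_intersection.Nil)
next
  case (singleton x)
  show ?case using running_intersection.snoc[OF running_intersection.Nil, of x] by simp
next
  case (snoc es e x)
  have x: "x \<notin> set es" "distinct es" using snoc.prems by auto
  have join: "hd p \<inter> last p \<subseteq> e'" if "is_path T p" "hd p \<noteq> last p" "e' \<in> set p" for p e'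
    using jt that unfolding is_join_tree_def by blast
  have "x \<inter> y \<subseteq> e" if y: "y \<in> set es" for y
  proof -
    obtain q where q: "is_walk T q" "hd q = e" "last q = y" "set q \<subseteq> set es"
      using neighbour_order_walk[OF snoc.hyps(1,2) y] by blast
    from walk_to_path[OF q(1)] obtain q' where
      q': "is_path T q'" "hd q' = e" "last q' = y" "set q' \<subseteq> set es"
      using q(2-4) by blast
    \<comment> \<open>prepending x to a path inside the prefix gives a path from x to y through e\<close>
    have "q' \<noteq> []" using q'(1) by (auto simp: is_path_def)
    then obtain q'' where q'': "q' = e # q''" using q'(2) by (cases q') auto
    have "is_path T (x # q')"
      using q' q'' x(1) snoc.hyps(3) by (auto simp: is_path_def)
    moreover have "y \<noteq> x" using x(1) y by blast
    ultimately have "hd (x # q') \<inter> last (x # q') \<subseteq> e"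
      using join[of "x # q'" e] q'(3) q'' by simp
    then show ?thesis using q'(3) q'' by simp
  qed
  then have "x \<inter> \<Union>(set es) \<subseteq> e" by blast
  with snoc.hyps(2,3) show ?case
    by (intro running_intersection.snoc[OF snoc.IH[OF x(2)]]) blast
qed

section \<open>The polytope and its vertices\<close>

lemma Lset_iff: "e \<in> Lset V \<longleftrightarrow> (\<exists>I\<in>V. e = {I})"
  by (auto simp: Lset_def)

lemma JH_iff: "J \<in> JH V E \<longleftrightarrow> (\<exists>e\<in>Lset V \<union> E. J \<in> Jfam e)"
  unfolding JH_def by blast

lemma prod_of_bool_mem: "finite J \<Longrightarrow> (\<Prod>i\<in>J. of_bool (i \<in> K) :: real) = of_bool (J \<subseteq> K)"
  by (induction J rule: finite_induct) auto

lemma convex_combination_in_conv_fun: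
  assumes "finite A" "A \<noteq> {}" "\<forall>a\<in>A. 0 \<le> p a" "sum p A = 1"
  shows "(\<lambda>x. \<Sum>a\<in>A. p a * f a x) \<in> conv_fun (f ` A)"
proof -
  define c where "c s = sum p {a\<in>A. f a = s}" for s
  have "(\<Sum>a\<in>A. p a * f a x) = (\<Sum>s\<in>f ` A. c s * s x)" for x
  proof -
    have "(\<Sum>a\<in>A. p a * f a x) = (\<Sum>s\<in>f ` A. \<Sum>a\<in>{a\<in>A. f a = s}. p a * f a x)"
      by (rule sum.image_gen[OF assms(1)])
    also have "\<dots> = (\<Sum>s\<in>f ` A. c s * s x)"
      unfolding c_def sum_distrib_right by (intro sum.cong) auto
    finally show ?thesis .
  qed
  moreover have "sum c (f ` A) = 1"
    unfolding c_def using sum.image_gen[OF assms(1), of p f] assms(4) by simp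
  moreover have "\<forall>s\<in>f ` A. 0 \<le> c s"
    unfolding c_def using assms(3) by (auto intro: sum_nonneg)
  ultimately show ?thesis
    unfolding conv_fun_def using assms(1,2) by blast
qed

lemma marginal_convex_combination:
  "marginal e (\<lambda>x. \<Sum>s\<in>F. c s * s x) J = (\<Sum>s\<in>F. c s * marginal e s J)"
  unfolding marginal_def by (subst sum.swap) (simp add: sum_distrib_left)

lemma MCdesc_iff: "w \<in> MCdesc V E T \<longleftrightarrow>
    (\<forall>J. J \<notin> JH V E \<longrightarrow> w J = 0) \<and> (\<forall>J\<in>JH V E. 0 \<le> w J) \<and> (\<forall>I\<in>V. wsum w I = 1) \<and>
    (\<forall>e\<in>E. \<forall>I\<in>e. \<forall>i\<in>I. w {i} = marginal e w {i}) \<and>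
    (\<forall>e e'. {e, e'} \<in> T \<longrightarrow> 1 < card (e \<inter> e') \<longrightarrow> marginals_agree e w e' w)"
  by (simp add: MCdesc_def marginal_def marginals_agree_def)

lemma convex_combination_in_MCdesc:
  assumes F: "F \<subseteq> MCdesc V E T" and c: "\<forall>s\<in>F. 0 \<le> c s" "sum c F = 1"
  shows "(\<lambda>x. \<Sum>s\<in>F. c s * s x) \<in> MCdesc V E T" (is "?w \<in> _")
proof -
  have affine: "(\<Sum>s\<in>F. c s * f s) = a" if "\<And>s. s \<in> F \<Longrightarrow> f s = a" for f a
    using c(2) that by (simp add: sum_distrib_right[symmetric])
  have s: "s \<in> MCdesc V E T" if "s \<in> F" for s using F that by blast
  have "?w J = 0" if "J \<notin> JH V E" for J
    using affine[of "\<lambda>s. s J" 0] s that by (simp add: MCdesc_iff)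
  moreover have "0 \<le> ?w J" if "J \<in> JH V E" for J
    using s c(1) that by (auto simp: MCdesc_iff intro!: sum_nonneg)
  moreover have "wsum ?w I = 1" if "I \<in> V" for I
    using affine[of "\<lambda>s. marginal {I} s {}" 1] s that
    by (simp add: wsum_eq_marginal marginal_convex_combination MCdesc_iff)
  moreover have "?w {i} = marginal e ?w {i}" if "e \<in> E" "I \<in> e" "i \<in> I" for e I i
    using s that by (auto simp: marginal_convex_combination MCdesc_iff intro!: sum.cong)
  moreover have "marginals_agree e ?w e' ?w" if "{e, e'} \<in> T" "1 < card (e \<inter> e')" for e e'
    using s that
    by (auto simp: marginals_agree_def marginal_convex_combination MCdesc_iff intro!: sum.cong)
  ultimately show ?thesis by (simp add: MCdesc_iff)
qed

definition transversal_point :: "nat set set \<Rightarrow> nat set set set \<Rightarrow> nat set \<Rightarrow> nat set \<Rightarrow> real"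
  where "transversal_point V E K J = of_bool (J \<in> JH V E \<and> J \<subseteq> K)"

locale block_hypergraph = block_family V for V +
  fixes E :: "nat set set set"
  assumes edge_subset: "e \<in> E \<Longrightarrow> e \<subseteq> V"
    and edge_nonempty: "e \<in> E \<Longrightarrow> e \<noteq> {}"
begin

lemma block_subset: "e \<in> Lset V \<union> E \<Longrightarrow> e \<subseteq> V"
  using edge_subset by (auto simp: Lset_iff)

lemma block_nonempty: "e \<in> Lset V \<union> E \<Longrightarrow> e \<noteq> {}"
  using edge_nonempty by (auto simp: Lset_iff)

lemma singleton_in_JH:
  assumes "I \<in> V" "i \<in> I"
  shows "{i} \<in> JH V E"
proof -
  have "{I} \<in> Lset V" "{i} \<in> Jfam {I}" using assms by (auto simp: Lset_iff Jfam_singleton)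
  then show ?thesis unfolding JH_iff by blast
qed

lemma JH_finite_nonempty:
  assumes "J \<in> JH V E"
  shows "finite J" "J \<noteq> {}" "J \<subseteq> \<Union>V"
proof -
  obtain e where e: "e \<in> Lset V \<union> E" "J \<in> Jfam e" using assms by (auto simp: JH_iff)
  then obtain I where "I \<in> e" using block_nonempty by blast
  then have "card (J \<inter> I) = 1" using e(2) by (simp add: Jfam_def)
  then show "J \<noteq> {}" by auto
  show "J \<subseteq> \<Union>V" using Jfam_subset_Union[OF e(2)] block_subset[OF e(1)] by blast
  then show "finite J" using finite_blocks by (meson finite_Union rev_finite_subset)
qed

lemma marginal_transversal_point:
  assumes K: "K \<in> Jfam V" and e: "e \<in> Lset V \<union> E" and J: "J \<subseteq> \<Union>e"
  shows "marginal e (transversal_point V E K) J = of_bool (J \<subseteq> K)"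
proof -
  have eV: "e \<subseteq> V" using block_subset[OF e] .
  \<comment> \<open>the only transversal of e inside K is the restriction of K\<close>
  have "{L \<in> Jfam e. J \<subseteq> L} \<inter> {L. L \<subseteq> K} = (if J \<subseteq> K then {K \<inter> \<Union>e} else {})"
    using Jfam_subset_iff[OF K _ eV] Int_Union_in_Jfam[OF K eV] J by auto
  moreover have "transversal_point V E K L = of_bool (L \<subseteq> K)" if "L \<in> Jfam e" for L
    using e that by (auto simp: transversal_point_def JH_iff)
  ultimately show ?thesis
    using finite_Jfam_subset[OF eV] by (simp add: marginal_def)
qed

lemma wsum_transversal_point: "K \<in> Jfam V \<Longrightarrow> I \<in> V \<Longrightarrow> wsum (transversal_point V E K) I = 1"
  by (simp add: wsum_eq_marginal marginal_transversal_point Lset_iff)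

lemma transversal_point_in_SH:
  assumes K: "K \<in> Jfam V"
  shows "transversal_point V E K \<in> SH V E"
proof -
  have "transversal_point V E K J = (\<Prod>i\<in>J. transversal_point V E K {i})" if J: "J \<in> JH V E" for J
  proof -
    have "transversal_point V E K {i} = of_bool (i \<in> K)" if "i \<in> J" for i
      using JH_finite_nonempty(3)[OF J] that singleton_in_JH by (auto simp: transversal_point_def)
    then show ?thesis
      using J JH_finite_nonempty(1)[OF J] by (simp add: prod_of_bool_mem transversal_point_def)
  qed
  moreover have "transversal_point V E K J \<in> {0, 1}" for J
    by (simp add: transversal_point_def)
  moreover have "transversal_point V E K J = 0" if "J \<notin> JH V E" for J
    using that by (simp add: transversal_point_def)
  ultimately show ?thesis
    using wsum_transversal_point[OF K] unfolding SH_def by blast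
qed

lemma SH_prod_singletons:
  assumes w: "w \<in> SH V E" and J: "J \<in> JH V E"
  shows "w J = (\<Prod>i\<in>J. w {i})"
proof (cases "card J = 1")
  case True
  then obtain i where "J = {i}" by (rule card_1_singletonE)
  then show ?thesis by simp
next
  case False
  have "0 < card J" using JH_finite_nonempty[OF J] by (simp add: card_gt_0_iff)
  then have "1 < card J" using False by linarith
  then show ?thesis using w J by (simp add: SH_def)
qed

lemma SH_eq_transversal_points: "SH V E = transversal_point V E ` Jfam V"
proof
  show "transversal_point V E ` Jfam V \<subseteq> SH V E" using transversal_point_in_SH by blast
  show "SH V E \<subseteq> transversal_point V E ` Jfam V"
  proof
    fix w assume w: "w \<in> SH V E"
    define K where "K = {i \<in> \<Union>V. w {i} = 1}"
    have wi: "w {i} = of_bool (i \<in> K)" if "i \<in> \<Union>V" for i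
      using w singleton_in_JH that by (fastforce simp: SH_def K_def)
    have "K \<in> Jfam V"
      unfolding Jfam_def
    proof (intro CollectI conjI ballI)
      show "K \<subseteq> \<Union>V" by (auto simp: K_def)
      fix I assume I: "I \<in> V"
      have "1 = (\<Sum>i\<in>I. w {i})" using w I by (simp add: SH_def wsum_def)
      also have "\<dots> = (\<Sum>i\<in>I. of_bool (i \<in> K))" by (intro sum.cong refl wi) (use I in blast)
      also have "\<dots> = card (K \<inter> I)" using finite_blocks(2)[OF I] by (simp add: Int_commute)
      finally show "card (K \<inter> I) = 1" by simp
    qed
    moreover have "w J = transversal_point V E K J" for J
    proof (cases "J \<in> JH V E")
      case True
      note J = JH_finite_nonempty[OF True]
      have "w J = (\<Prod>i\<in>J. of_bool (i \<in> K))"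
        unfolding SH_prod_singletons[OF w True] by (intro prod.cong refl wi) (use J(3) in blast)
      then show ?thesis using True J(1) by (simp add: prod_of_bool_mem transversal_point_def)
    next
      case False
      then show ?thesis using w by (simp add: SH_def transversal_point_def)
    qed
    ultimately show "w \<in> transversal_point V E ` Jfam V" by auto
  qed
qed

end

section \<open>Exactness of the linear description\<close>

context block_hypergraph
begin

lemma transversal_point_in_MCdesc:
  assumes tree: "is_tree E T" and K: "K \<in> Jfam V"
  shows "transversal_point V E K \<in> MCdesc V E T"
proof -
  have "transversal_point V E K {i} = marginal e (transversal_point V E K) {i}"
    if "e \<in> E" "I \<in> e" "i \<in> I" for e I i
  proof -
    have "{i} \<in> JH V E" using that edge_subset singleton_in_JH by blast
    moreover have "marginal e (transversal_point V E K) {i} = of_bool ({i} \<subseteq> K)"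
      using marginal_transversal_point[OF K, of e "{i}"] that by blast
    ultimately show ?thesis by (simp add: transversal_point_def)
  qed
  moreover have "marginals_agree e (transversal_point V E K) e' (transversal_point V E K)"
    if "{e, e'} \<in> T" for e e'
    unfolding marginals_agree_def
  proof
    fix J assume "J \<in> Jfam (e \<inter> e')"
    then have "J \<subseteq> \<Union>e" "J \<subseteq> \<Union>e'" using Jfam_subset_Union by blast+
    moreover have "e \<in> Lset V \<union> E" "e' \<in> Lset V \<union> E" using tree_edge_nodes[OF tree that] by auto
    ultimately show "marginal e (transversal_point V E K) J = marginal e' (transversal_point V E K) J"
      by (simp add: marginal_transversal_point[OF K])
  qed
  ultimately show ?thesis
    using wsum_transversal_point[OF K] by (auto simp: MCdesc_iff transversal_point_def)
qed

lemma MCdesc_singleton_marginal: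
  assumes w: "w \<in> MCdesc V E T" and e: "e \<in> Lset V \<union> E" and "I \<in> e" "i \<in> I"
  shows "marginal e w {i} = w {i}"
  using e
proof
  assume "e \<in> Lset V"
  then have "e = {I}" using \<open>I \<in> e\<close> by (auto simp: Lset_iff)
  then have "{J \<in> Jfam e. {i} \<subseteq> J} = {{i}}" using \<open>i \<in> I\<close> by (auto simp: Jfam_singleton)
  then show ?thesis by (simp add: marginal_def)
qed (use w assms in \<open>simp add: MCdesc_iff\<close>)

lemma MCdesc_block_mass:
  assumes w: "w \<in> MCdesc V E T" and e: "e \<in> Lset V \<union> E"
  shows "sum w (Jfam e) = 1"
proof -
  obtain I where I: "I \<in> e" using block_nonempty[OF e] by blast
  have IV: "I \<in> V" using I block_subset[OF e] by blast
  have "sum w (Jfam e) = marginal {I} (marginal e w) {}"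
    using marginal_marginal[of "{}" "{I}" e "{}" w] I block_subset[OF e]
    by (simp add: marginal_empty)
  also have "\<dots> = wsum w I"
    using MCdesc_singleton_marginal[OF w e I] by (simp add: wsum_eq_marginal[symmetric] wsum_def)
  also have "\<dots> = 1" using w IV by (simp add: MCdesc_iff)
  finally show ?thesis .
qed

lemma MCdesc_marginals_agree_tree_edge:
  assumes w: "w \<in> MCdesc V E T" and tree: "is_tree E T" and t: "{e, e'} \<in> T"
  shows "marginals_agree e w e' w"
proof -
  have E: "e \<in> E" "e' \<in> E" using tree_edge_nodes[OF tree t] by auto
  then have fin: "finite (e \<inter> e')" using edge_subset finite_blocks(1) by (meson finite_Int rev_finite_subset)
  consider "1 < card (e \<inter> e')" | "card (e \<inter> e') = 1" | "e \<inter> e' = {}"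
    using fin by (cases "card (e \<inter> e')") auto
  then show ?thesis
  proof cases
    case 1
    then show ?thesis using w t by (simp add: MCdesc_iff)
  next
    case 2
    then obtain I where I: "e \<inter> e' = {I}" by (rule card_1_singletonE)
    then have "I \<in> e" "I \<in> e'" by auto
    then show ?thesis
      using I MCdesc_singleton_marginal[OF w] E by (auto simp: marginals_agree_def Jfam_singleton)
  next
    case 3
    then show ?thesis
      using MCdesc_block_mass[OF w] E by (simp add: marginals_agree_def marginal_empty)
  qed
qed

lemma MCdesc_marginals_agree_singleton:
  assumes w: "w \<in> MCdesc V E T" and X: "X \<in> Lset V \<union> E" and "I \<in> X"
  shows "marginals_agree {I} w X w"
proof -
  have "{I} \<in> Lset V" using \<open>I \<in> X\<close> block_subset[OF X] by (auto simp: Lset_iff)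
  then show ?thesis
    using \<open>I \<in> X\<close> MCdesc_singleton_marginal[OF w] X
    by (auto simp: marginals_agree_def Jfam_singleton)
qed

lemma MCdesc_distribution:
  assumes w: "w \<in> MCdesc V E T" and jt: "is_join_tree E T"
  shows "\<exists>p. (\<forall>K\<in>Jfam V. 0 \<le> p K) \<and> sum p (Jfam V) = 1 \<and> (\<forall>J\<in>JH V E. marginal V p J = w J)"
proof -
  have tree: "is_tree E T" using jt by (simp add: is_join_tree_def)
  obtain es where es: "distinct es" "set es = E" "neighbour_order T es"
    using exists_neighbour_order[OF tree] by blast
  obtain vs where vs: "set vs = V" using finite_list finite_blocks(1) by blast
  \<comment> \<open>the singleton blocks are appended so that the glued blocks cover all of V\<close>
  define bs where "bs = es @ map (\<lambda>I. {I}) vs"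
  have bs: "set bs = Lset V \<union> E" using es(2) vs by (auto simp: bs_def Lset_iff)
  have "running_intersection (\<lambda>x e. {x, e} \<in> T) es"
    using join_tree_running_intersection[OF jt es(3,1)] .
  then have "running_intersection (\<lambda>x e. marginals_agree x w e w) es"
    by (rule running_intersection_mono) (rule MCdesc_marginals_agree_tree_edge[OF w tree])
  then have "running_intersection (\<lambda>x e. marginals_agree x w e w) bs"
    unfolding bs_def
    by (rule running_intersection_append_singletons)
      (use MCdesc_marginals_agree_singleton[OF w] bs in \<open>auto simp: bs_def\<close>)
  moreover have "\<forall>e\<in>set bs. \<forall>J\<in>Jfam e. 0 \<le> w J"
    using w bs by (auto simp: MCdesc_iff JH_iff)
  ultimately obtain p where p: "\<forall>K\<in>Jfam (\<Union>(set bs)). 0 \<le> p K" "sum p (Jfam (\<Union>(set bs))) = 1"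
    "\<forall>e\<in>set bs. \<forall>J\<in>Jfam e. marginal (\<Union>(set bs)) p J = w J"
    using glued_distribution[of w bs] bs block_subset MCdesc_block_mass[OF w] by auto
  have "\<Union>(set bs) = V" using bs block_subset by (auto simp: Lset_iff)
  moreover have "\<forall>J\<in>JH V E. marginal (\<Union>(set bs)) p J = w J" using p(3) unfolding bs JH_def by blast
  ultimately show ?thesis using p(1,2) by auto
qed

lemma mixture_of_transversal_points:
  assumes marg: "\<forall>J\<in>JH V E. marginal V p J = w J" and zero: "\<forall>J. J \<notin> JH V E \<longrightarrow> w J = 0"
  shows "w = (\<lambda>J. \<Sum>K\<in>Jfam V. p K * transversal_point V E K J)"
proof
  fix J
  show "w J = (\<Sum>K\<in>Jfam V. p K * transversal_point V E K J)"
  proof (cases "J \<in> JH V E")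
    case True
    then have "(\<Sum>K\<in>Jfam V. p K * transversal_point V E K J) = (\<Sum>K\<in>Jfam V. if J \<subseteq> K then p K else 0)"
      by (intro sum.cong) (auto simp: transversal_point_def)
    also have "\<dots> = marginal V p J"
      by (simp add: marginal_def sum.inter_filter finite_Jfam_subset)
    finally show ?thesis using marg True by simp
  qed (simp add: zero transversal_point_def)
qed

lemma MC_subset_MCdesc:
  assumes tree: "is_tree E T"
  shows "MC V E \<subseteq> MCdesc V E T"
proof
  fix w assume "w \<in> MC V E"
  then obtain F c where F: "F \<subseteq> transversal_point V E ` Jfam V"
    and c: "\<forall>s\<in>F. 0 \<le> c s" "sum c F = 1" and w: "w = (\<lambda>x. \<Sum>s\<in>F. c s * s x)"
    unfolding MC_def conv_fun_def SH_eq_transversal_points by blast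
  have "F \<subseteq> MCdesc V E T" using F transversal_point_in_MCdesc[OF tree] by blast
  then show "w \<in> MCdesc V E T" unfolding w by (rule convex_combination_in_MCdesc[OF _ c])
qed

lemma MCdesc_subset_MC:
  assumes jt: "is_join_tree E T"
  shows "MCdesc V E T \<subseteq> MC V E"
proof
  fix w assume w: "w \<in> MCdesc V E T"
  obtain p where p: "\<forall>K\<in>Jfam V. 0 \<le> p K" "sum p (Jfam V) = 1" "\<forall>J\<in>JH V E. marginal V p J = w J"
    using MCdesc_distribution[OF w jt] by blast
  have "w = (\<lambda>J. \<Sum>K\<in>Jfam V. p K * transversal_point V E K J)"
    using mixture_of_transversal_points[OF p(3)] w by (simp add: MCdesc_iff)
  moreover have "Jfam V \<noteq> {}" using p(2) by auto
  ultimately show "w \<in> MC V E"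
    unfolding MC_def SH_eq_transversal_points
    using convex_combination_in_conv_fun[OF finite_Jfam_subset[OF order_refl]] p(1,2) by auto
qed

end

lemma block_hypergraph_of_partition:
  assumes "partition_ge2 n V" "hyperedges_ok V E"
  shows "block_hypergraph V E"
proof
  have UV: "\<Union>V = {1..n}" using assms(1) by (simp add: partition_ge2_def)
  show "disjoint V" using assms(1) by (auto simp: partition_ge2_def disjoint_def)
  show "finite V" using UV by (metis finite_UnionD finite_atLeastAtMost)
  show "finite I" if "I \<in> V" for I using UV that by (metis Union_upper finite_atLeastAtMost rev_finite_subset)
  show "e \<subseteq> V" "e \<noteq> {}" if "e \<in> E" for e
    using assms(2) that by (auto simp: hyperedges_ok_def)
qed

theorem theorem1p1:
  fixes n :: nat and V :: "nat set set" and E :: "nat set set set"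
    and T :: "nat set set set set"
  assumes "n \<ge> 1"
    and "partition_ge2 n V"
    and "hyperedges_ok V E"
    and "alpha_acyclic V E"
    and "is_join_tree E T"
  shows "MC V E = MCdesc V E T"
proof -
  interpret block_hypergraph V E using block_hypergraph_of_partition[OF assms(2,3)] .
  have "is_tree E T" using assms(5) by (simp add: is_join_tree_def)
  then show ?thesis using MC_subset_MCdesc MCdesc_subset_MC[OF assms(5)] by blast
qed

end
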